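(* Let $m\ge3$, let $w_0^2(m)=\big(\sum_{l=1}^{m-1}\frac{m-l}{l^2}\big)^{-1}$, and for $k\ge0$ let $$w_{k+1}^2(m)=w_k^2(m)+\Big(\sum_{l=1}^{m-1}\frac{m-l}{l^2-w_k^2(m)}\Big)^{-1},$$ with $w_k(m)>0$. Then $w_0^2<w_1^2<\dots<w_k^2<1$ for all $k$, $\lim_{k\to\infty}w_k(m)=1$, and for each $k$, writing $w_k(m)=1-\varepsilon$ with $0<\varepsilon<1$, $$\frac{4\varepsilon}{7m-4}<w_{k+1}^2(m)-w_k^2(m)<\frac{1}{m-1}.$$ *)

theory Defs
  imports Complex_Main
begin

fun wsq :: "nat \<Rightarrow> nat \<Rightarrow> real" where
  "wsq m 0 = 1 / (\<Sum>l=1..m-1. (real m - real l) / (real l)^2)"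
| "wsq m (Suc k) = wsq m k + 1 / (\<Sum>l=1..m-1. (real m - real l) / ((real l)^2 - wsq m k))"

definition w :: "nat \<Rightarrow> nat \<Rightarrow> real" where
  "w m k = sqrt (wsq m k)"

end

theory Submission
  imports Defs
begin

(*
  Put S(x) = sum_{l=1}^{m-1} (m - l)/(l^2 - x) (denom_sum m x below), so that
  w_{k+1}^2 = w_k^2 + 1/S(w_k^2). For x < 1 the term l = 1 of S(x) is (m - 1)/(1 - x); the
  remaining terms are positive and, since sum_{l>=2} 1/(l^2 - 1) telescopes to 3/4, add up to
  at most 3m/4. The lower estimate keeps every increment below (1 - x)/(m - 1), so the iterates
  increase and stay in (0, 1). The upper estimate together with 1 - x >= 1 - sqrt x = eps gives
  S(x) < (7m - 4)/(4 eps), the lower bound on the increment. The increments of the bounded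
  increasing sequence tend to 0 and dominate 4 eps/(7m - 4), so w_k tends to 1.
*)

lemma inverse_mult_add_two_eq:
  fixes a :: real
  assumes "0 < a"
  shows "1 / (a * (a + 2)) = 1 / (2 * a) - 1 / (2 * (a + 2))"
  using assms by (simp add: divide_simps)

lemma sum_inverse_square_minus_one:
  "(\<Sum>l=2..Suc n. 1 / ((real l)^2 - 1)) = 3/4 - 1 / (2 * (real n + 1)) - 1 / (2 * (real n + 2))"
proof (induction n)
  case 0
  then show ?case by simp
next
  case (Suc n)
  have factor: "(real (Suc (Suc n)))^2 - 1 = (real n + 1) * (real n + 1 + 2)"
    by (simp add: power2_eq_square algebra_simps)
  have last_term:
    "1 / ((real (Suc (Suc n)))^2 - 1) = 1 / (2 * (real n + 1)) - 1 / (2 * (real n + 1 + 2))"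
    unfolding factor by (rule inverse_mult_add_two_eq) simp
  have shift: "real (Suc n) + 1 = real n + 2" "real (Suc n) + 2 = real n + 1 + 2"
    by simp_all
  have "(\<Sum>l=2..Suc (Suc n). 1 / ((real l)^2 - 1))
      = (\<Sum>l=2..Suc n. 1 / ((real l)^2 - 1)) + 1 / ((real (Suc (Suc n)))^2 - 1)"
    by simp
  also have "\<dots> = 3/4 - 1 / (2 * (real n + 1)) - 1 / (2 * (real n + 2))
      + (1 / (2 * (real n + 1)) - 1 / (2 * (real n + 1 + 2)))"
    by (simp only: Suc.IH last_term)
  also have "\<dots> = 3/4 - 1 / (2 * (real (Suc n) + 1)) - 1 / (2 * (real (Suc n) + 2))"
    unfolding shift by linarith
  finally show ?case .
qed

lemma sum_inverse_square_minus_one_le: "(\<Sum>l=2..n. 1 / ((real l)^2 - 1)) \<le> 3/4"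
proof (cases n)
  case (Suc k)
  have "0 \<le> 1 / (2 * (real k + 1))" "0 \<le> 1 / (2 * (real k + 2))" by auto
  then show ?thesis using sum_inverse_square_minus_one[of k] unfolding Suc by linarith
qed simp

definition denom_sum :: "nat \<Rightarrow> real \<Rightarrow> real" where
  "denom_sum m x = (\<Sum>l=1..m-1. (real m - real l) / ((real l)^2 - x))"

lemma wsq_0_denom_sum: "wsq m 0 = 1 / denom_sum m 0"
  by (simp add: denom_sum_def)

lemma wsq_Suc_denom_sum: "wsq m (Suc k) = wsq m k + 1 / denom_sum m (wsq m k)"
  by (simp add: denom_sum_def)

lemma denom_sum_split_first:
  assumes "m \<ge> 2"
  shows "denom_sum m x = (real m - 1) / (1 - x) + (\<Sum>l=2..m-1. (real m - real l) / ((real l)^2 - x))"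
proof -
  have "{1..m-1} = insert 1 {2..m-1}" using assms by auto
  then show ?thesis unfolding denom_sum_def by simp
qed

lemma first_term_less_denom_sum:
  assumes m: "m \<ge> 3" and x: "x < 1"
  shows "(real m - 1) / (1 - x) < denom_sum m x"
proof -
  have nonneg: "0 \<le> (real m - real l) / ((real l)^2 - x)" if l: "l \<in> {2..m-1}" for l
  proof -
    have "1 \<le> real l" using l by simp
    then have "1 \<le> (real l)^2" by (simp add: one_le_power)
    then have "0 < (real l)^2 - x" using x by linarith
    moreover have "0 \<le> real m - real l" using l by auto
    ultimately show ?thesis by simp
  qed
  have "(real m - real 2) / ((real 2)^2 - x) \<le> (\<Sum>l=2..m-1. (real m - real l) / ((real l)^2 - x))"
    by (rule member_le_sum) (use m nonneg in auto)
  moreover have "0 < (real m - real 2) / ((real 2)^2 - x)"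
    using m x by (intro divide_pos_pos) auto
  ultimately show ?thesis using denom_sum_split_first[of m x] m by linarith
qed

lemma denom_sum_le:
  assumes m: "m \<ge> 2" and x: "x < 1"
  shows "denom_sum m x \<le> (real m - 1) / (1 - x) + 3 * real m / 4"
proof -
  have "(\<Sum>l=2..m-1. (real m - real l) / ((real l)^2 - x)) \<le> (\<Sum>l=2..m-1. real m * (1 / ((real l)^2 - 1)))"
  proof (rule sum_mono)
    fix l assume l: "l \<in> {2..m-1}"
    have "2 \<le> real l" using l by simp
    then have "2^2 \<le> (real l)^2" by (intro power_mono) auto
    then have "(real m - real l) / ((real l)^2 - x) \<le> real m / ((real l)^2 - 1)"
      using l x by (intro frac_le) auto
    then show "(real m - real l) / ((real l)^2 - x) \<le> real m * (1 / ((real l)^2 - 1))" by simp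
  qed
  also have "\<dots> \<le> real m * (3/4)"
    unfolding sum_distrib_left[symmetric] by (rule mult_left_mono[OF sum_inverse_square_minus_one_le]) simp
  finally show ?thesis using denom_sum_split_first[OF m, of x] by linarith
qed

lemma inverse_denom_sum_bounds:
  assumes m: "m \<ge> 3" and x: "x < 1"
  shows "0 < 1 / denom_sum m x" and "1 / denom_sum m x < (1 - x) / (real m - 1)"
proof -
  have first_pos: "0 < (real m - 1) / (1 - x)" using m x by simp
  then show "0 < 1 / denom_sum m x"
    using first_term_less_denom_sum[OF m x] by simp
  have "inverse (denom_sum m x) < inverse ((real m - 1) / (1 - x))"
    by (rule less_imp_inverse_less[OF first_term_less_denom_sum[OF m x] first_pos])
  then show "1 / denom_sum m x < (1 - x) / (real m - 1)"
    by (simp add: inverse_eq_divide)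
qed

lemma inverse_denom_sum_gt:
  assumes m: "m \<ge> 3" and x: "0 < x" "x < 1"
  shows "4 * (1 - sqrt x) / (7 * real m - 4) < 1 / denom_sum m x"
proof -
  define e where "e = 1 - sqrt x"
  have e: "0 < e" "e < 1" using x by (auto simp: e_def)
  have "1 - x = e + e * sqrt x"
    using x by (simp add: e_def algebra_simps power2_eq_square[symmetric])
  moreover have "0 \<le> e * sqrt x" using e x by simp
  ultimately have e_le: "e \<le> 1 - x" by linarith
  have "(real m - 1) / (1 - x) \<le> (real m - 1) / e"
    using e_le e m by (intro divide_left_mono) auto
  moreover have "3 * real m / 4 < 3 * real m / (4 * e)"
    using e m by (simp add: less_divide_eq)
  ultimately have "denom_sum m x < (real m - 1) / e + 3 * real m / (4 * e)"
    using denom_sum_le[of m x] m x by linarith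
  also have "\<dots> = (7 * real m - 4) / (4 * e)"
    using e by (simp add: field_simps)
  finally have "inverse ((7 * real m - 4) / (4 * e)) < inverse (denom_sum m x)"
    using inverse_denom_sum_bounds(1)[OF m x(2)] by (intro less_imp_inverse_less) auto
  then show ?thesis by (simp add: e_def inverse_eq_divide)
qed

lemma wsq_bounds:
  assumes m: "m \<ge> 3"
  shows "0 < wsq m k \<and> wsq m k < 1"
proof (induction k)
  case 0
  have "1 / denom_sum m 0 < 1 / (real m - 1)" "1 / (real m - 1) < 1"
    using inverse_denom_sum_bounds(2)[OF m, of 0] m by simp_all
  then show ?case
    using inverse_denom_sum_bounds(1)[OF m, of 0] unfolding wsq_0_denom_sum by linarith
next
  case (Suc k)
  then have "(1 - wsq m k) / (real m - 1) \<le> 1 - wsq m k"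
    using m by (simp add: divide_le_eq)
  then show ?case
    using inverse_denom_sum_bounds[OF m, of "wsq m k"] Suc
    unfolding wsq_Suc_denom_sum by linarith
qed

lemma wsq_less_Suc:
  assumes "m \<ge> 3"
  shows "wsq m k < wsq m (Suc k)"
  using inverse_denom_sum_bounds(1)[OF assms] wsq_bounds[OF assms]
  unfolding wsq_Suc_denom_sum by simp

lemma wsq_increment_less:
  assumes m: "m \<ge> 3"
  shows "wsq m (Suc k) - wsq m k < 1 / (real m - 1)"
proof -
  have "(1 - wsq m k) / (real m - 1) < 1 / (real m - 1)"
    using wsq_bounds[OF m, of k] m by (intro divide_strict_right_mono) auto
  then show ?thesis
    using inverse_denom_sum_bounds(2)[OF m, of "wsq m k"] wsq_bounds[OF m, of k]
    unfolding wsq_Suc_denom_sum by simp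
qed

lemma wsq_increment_gt:
  assumes m: "m \<ge> 3"
  shows "4 * (1 - w m k) / (7 * real m - 4) < wsq m (Suc k) - wsq m k"
  using inverse_denom_sum_gt[OF m] wsq_bounds[OF m, of k]
  unfolding wsq_Suc_denom_sum w_def by simp

lemma w_bounds:
  assumes "m \<ge> 3"
  shows "0 < w m k \<and> w m k < 1"
  using wsq_bounds[OF assms, of k] by (simp add: w_def)

lemma LIMSEQ_Suc_minus_zero:
  fixes X :: "nat \<Rightarrow> 'a::real_normed_vector"
  assumes "X \<longlonglongrightarrow> L"
  shows "(\<lambda>n. X (Suc n) - X n) \<longlonglongrightarrow> 0"
  using tendsto_diff[OF LIMSEQ_Suc[OF assms] assms] by simp

lemma w_tendsto_1:
  assumes m: "m \<ge> 3"
  shows "w m \<longlonglongrightarrow> 1"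
proof -
  have "incseq (wsq m)"
    using wsq_less_Suc[OF m] by (intro incseq_SucI) (simp add: less_imp_le)
  then obtain L where "wsq m \<longlonglongrightarrow> L"
    using wsq_bounds[OF m] by (metis incseq_convergent less_imp_le)
  then have "(\<lambda>k. wsq m (Suc k) - wsq m k) \<longlonglongrightarrow> 0"
    by (rule LIMSEQ_Suc_minus_zero)
  then have bound_lim: "(\<lambda>k. (wsq m (Suc k) - wsq m k) * (7 * real m - 4) / 4) \<longlonglongrightarrow> 0"
    by (rule tendsto_divide_zero[OF tendsto_mult_left_zero])
  have bound: "\<forall>k. 1 - w m k \<le> (wsq m (Suc k) - wsq m k) * (7 * real m - 4) / 4"
  proof
    fix k
    define d where "d = wsq m (Suc k) - wsq m k"
    define c where "c = 7 * real m - 4"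
    have "0 < c" using m by (simp add: c_def)
    then have "4 * (1 - w m k) < d * c"
      using wsq_increment_gt[OF m, of k] by (simp add: c_def d_def pos_divide_less_eq)
    then have "(1 - w m k) * 4 \<le> d * c"
      by linarith
    then have "1 - w m k \<le> d * c / 4"
      by (simp only: le_divide_eq_numeral1)
    then show "1 - w m k \<le> (wsq m (Suc k) - wsq m k) * (7 * real m - 4) / 4"
      by (simp only: c_def d_def)
  qed
  have nonneg: "\<forall>k. 0 \<le> 1 - w m k"
    using w_bounds[OF m] by (simp add: less_imp_le)
  have "(\<lambda>k. 1 - w m k) \<longlonglongrightarrow> 0"
    using tendsto_sandwich[OF always_eventually[OF nonneg] always_eventually[OF bound]
        tendsto_const bound_lim] .
  then have "(\<lambda>k. 1 - (1 - w m k)) \<longlonglongrightarrow> 1 - 0"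
    by (rule tendsto_diff[OF tendsto_const])
  then show ?thesis by simp
qed

theorem mainTheorem11:
  fixes m :: nat
  assumes "m \<ge> 3"
  shows "0 < wsq m 0
    \<and> (\<forall>k. wsq m k < wsq m (Suc k) \<and> wsq m k < 1)
    \<and> (\<lambda>k. w m k) \<longlonglongrightarrow> 1
    \<and> (\<forall>k. 0 < 1 - w m k \<and> 1 - w m k < 1
          \<and> 4 * (1 - w m k) / (7 * real m - 4) < wsq m (Suc k) - wsq m k
          \<and> wsq m (Suc k) - wsq m k < 1 / (real m - 1))"
proof (intro conjI allI)
  fix k
  show "0 < wsq m 0" "wsq m k < 1"
    using wsq_bounds[OF assms] by blast+
  show "wsq m k < wsq m (Suc k)"
    by (rule wsq_less_Suc[OF assms])
  show "w m \<longlonglongrightarrow> 1"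
    by (rule w_tendsto_1[OF assms])
  show "0 < 1 - w m k" "1 - w m k < 1"
    using w_bounds[OF assms, of k] by simp_all
  show "4 * (1 - w m k) / (7 * real m - 4) < wsq m (Suc k) - wsq m k"
    by (rule wsq_increment_gt[OF assms])
  show "wsq m (Suc k) - wsq m k < 1 / (real m - 1)"
    by (rule wsq_increment_less[OF assms])
qed

end
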